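(* Let $n\ge2$, $0<s\le 1/(25n^2)$, $b_1,\dots,b_{n-1}\in\mathbb{C}$ with $|b_i|=s^i$, and let $P_n$ be as defined below. For $1\le i\le n-1$ and $1\le j\le 2n+2$ let $\widetilde w_{i,j}=b_i\exp\!\big(\pi\mathrm{i}\tfrac{2j-1}{2n+2}\big)$. Then there is a critical point $w_{i,j}\in\mathbb{C}\setminus\{0\}$ of $P_n$ (a solution of $zP_n'(z)/(P_n(z)-B_n)=0$) with $|w_{i,j}-\widetilde w_{i,j}|<s^{n+1/2}|b_i|$, and $w_{i_1,j_1}=w_{i_2,j_2}$ if and only if $(i_1,j_1)=(i_2,j_2)$.
   Context: $C_n=\sum_{i=1}^{n-1}\frac{(-1)^{i-1}b_i^{2n+2}}{1-b_i^{2n+2}}$, $A_n=\frac{1}{1+(2n+2)C_n}\prod_{i=1}^{n-1}(1-b_i^{2n+2})^{(-1)^i}$, $B_n=\frac{(2n+2)C_n}{1+(2n+2)C_n}$, and $$P_n(z)=A_n\,\frac{(n+1)z^{(-1)^{n+1}(n+1)}}{nz^{n+1}+1}\prod_{i=1}^{n-1}\big(z^{2n+2}-b_i^{2n+2}\big)^{(-1)^{i-1}}+B_n.$$ *)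

theory Defs
  imports "HOL-Analysis.Analysis"
begin

definition C_n :: "nat \<Rightarrow> (nat \<Rightarrow> complex) \<Rightarrow> complex" where
  "C_n n b = (\<Sum>i=1..n-1. (-1)^(i-1) * b i ^ (2*n+2) / (1 - b i ^ (2*n+2)))"

definition A_n :: "nat \<Rightarrow> (nat \<Rightarrow> complex) \<Rightarrow> complex" where
  "A_n n b = 1 / (1 + of_nat (2*n+2) * C_n n b) *
     (\<Prod>i=1..n-1. (1 - b i ^ (2*n+2)) powi ((-1)^i))"

definition B_n :: "nat \<Rightarrow> (nat \<Rightarrow> complex) \<Rightarrow> complex" where
  "B_n n b = of_nat (2*n+2) * C_n n b / (1 + of_nat (2*n+2) * C_n n b)"

definition P_n :: "nat \<Rightarrow> (nat \<Rightarrow> complex) \<Rightarrow> complex \<Rightarrow> complex" where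
  "P_n n b z = A_n n b * (of_nat (n+1) * z powi ((-1)^(n+1) * int (n+1)) / (of_nat n * z^(n+1) + 1))
      * (\<Prod>i=1..n-1. (z^(2*n+2) - b i ^ (2*n+2)) powi ((-1)^(i-1))) + B_n n b"

text \<open>z is a point where P_n is defined (nonzero, not a pole) and P_n z differs from B_n,
  so z P_n'(z)/(P_n(z) - B_n) is a well-defined quantity; it is a critical point when this
  quantity vanishes, i.e. when the derivative of P_n at z is zero.\<close>
definition is_crit_P :: "nat \<Rightarrow> (nat \<Rightarrow> complex) \<Rightarrow> complex \<Rightarrow> bool" where
  "is_crit_P n b z \<longleftrightarrow> z \<noteq> 0 \<and> of_nat n * z^(n+1) + 1 \<noteq> 0 \<and>
     (\<forall>i\<in>{1..n-1}. z^(2*n+2) \<noteq> b i ^ (2*n+2)) \<and> P_n n b z \<noteq> B_n n b \<and>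
     (P_n n b has_field_derivative 0) (at z)"

end

theory Submission
  imports Defs
begin

text \<open>
  With \<open>N = 2n+2\<close>, the function \<open>z P_n'(z) / (P_n(z) - B_n)\<close> is the sum of the logarithmic
  derivatives of the factors of \<open>P_n - B_n\<close>, one term per factor. For \<open>|z|\<close> close to \<open>|b_i|\<close> the
  factors with \<open>k \<noteq> i\<close> contribute almost constants, because the \<open>|b_k|\<close> are separated by
  powers of \<open>s\<close>; together with the two remaining factors these constants add up to exactly
  \<open>(-1)^i N/2\<close>. Hence the critical point equation takes the form
  \<open>z^N = -b_i^N E(z)/(1 - E(z))\<close> with \<open>E(z) = 1/2 + O(n s^(n+1))\<close>, and choosing the \<open>N\<close>-th root
  near \<open>b_i \<omega>_j\<close> turns it into a fixed point problem for a self-map of the disc of radius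
  \<open>2 s^(n+1) |b_i|\<close> around \<open>b_i \<omega>_j\<close>, which Brouwer's theorem solves. These discs are pairwise
  disjoint: those for different \<open>i\<close> lie in far apart annuli, and those for different \<open>j\<close> are
  separated since distinct \<open>N\<close>-th roots of unity are at distance at least \<open>1/N\<close>.
\<close>

subsection \<open>Logarithmic derivatives\<close>

text \<open>A derivative written as \<open>f x * L\<close> exhibits \<open>L\<close> as the logarithmic derivative of \<open>f\<close> at \<open>x\<close>.\<close>

lemma logderiv_mult:
  assumes "(f has_field_derivative f x * L1) (at x)" "(g has_field_derivative g x * L2) (at x)"
  shows "((\<lambda>y. f y * g y) has_field_derivative (f x * g x) * (L1 + L2)) (at x)"
  using DERIV_mult[OF assms] by (simp add: algebra_simps)

lemma logderiv_divide:
  assumes "(f has_field_derivative f x * L1) (at x)" "(g has_field_derivative g x * L2) (at x)"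
    and "g x \<noteq> (0::'a::real_normed_field)"
  shows "((\<lambda>y. f y / g y) has_field_derivative (f x / g x) * (L1 - L2)) (at x)"
proof -
  have "(f x * L1 * g x - f x * (g x * L2)) / (g x * g x) = (f x / g x) * (L1 - L2)"
    using assms(3) by (simp add: field_simps)
  then show ?thesis using DERIV_divide[OF assms] by simp
qed

lemma logderiv_prod:
  assumes "finite S" "\<And>k. k \<in> S \<Longrightarrow> (f k has_field_derivative f k x * L k) (at x)"
  shows "((\<lambda>y. \<Prod>k\<in>S. f k y) has_field_derivative (\<Prod>k\<in>S. f k x) * (\<Sum>k\<in>S. L k)) (at x)"
  using assms
proof (induction S rule: finite_induct)
  case (insert a F)
  have "((\<lambda>y. f a y * (\<Prod>k\<in>F. f k y)) has_field_derivative
      (f a x * (\<Prod>k\<in>F. f k x)) * (L a + (\<Sum>k\<in>F. L k))) (at x)"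
    by (rule logderiv_mult) (use insert in auto)
  then show ?case using insert by simp
qed simp

lemma logderiv_of_nonzero:
  assumes "(f has_field_derivative D) (at x)" "f x \<noteq> (0::'a::real_normed_field)"
  shows "(f has_field_derivative f x * (D / f x)) (at x)"
  using assms by simp

lemma logderiv_power_int:
  assumes "(x::complex) \<noteq> 0"
  shows "((\<lambda>y. y powi e) has_field_derivative (x powi e) * (of_int e / x)) (at x)"
proof -
  have "((\<lambda>y. y powi e) has_field_derivative of_int e * x powi (e - 1) * 1) (at x)"
    by (rule DERIV_power_int) (use assms in auto)
  moreover have "of_int e * x powi (e - 1) * 1 = (x powi e) * (of_int e / x)"
    using assms by (simp add: power_int_diff field_simps)
  ultimately show ?thesis by simp
qed

lemma logderiv_power_diff_power_int:
  assumes "(x::complex) ^ m \<noteq> c"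
  shows "((\<lambda>y. (y ^ m - c) powi e) has_field_derivative
    ((x ^ m - c) powi e) * (of_int e * of_nat m * x ^ (m - 1) / (x ^ m - c))) (at x)"
proof -
  have "((\<lambda>y. (y ^ m - c) powi e) has_field_derivative
      of_int e * (x ^ m - c) powi (e - 1) * (of_nat m * x ^ (m - 1))) (at x)"
    by (rule DERIV_power_int) (use assms in \<open>auto intro!: derivative_eq_intros\<close>)
  moreover have "of_int e * (x ^ m - c) powi (e - 1) * (of_nat m * x ^ (m - 1))
      = ((x ^ m - c) powi e) * (of_int e * of_nat m * x ^ (m - 1) / (x ^ m - c))"
    using assms by (simp add: power_int_diff field_simps)
  ultimately show ?thesis by simp
qed

lemma logderiv_scaled_power_plus_one:
  assumes "a * (x::complex) ^ (m+1) + 1 \<noteq> 0"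
  shows "((\<lambda>y. a * y ^ (m+1) + 1) has_field_derivative
    (a * x ^ (m+1) + 1) * (a * of_nat (m+1) * x ^ m / (a * x ^ (m+1) + 1))) (at x)"
proof -
  have "((\<lambda>y. y ^ (m+1)) has_field_derivative of_nat (m+1) * x ^ m) (at x)"
    by (rule DERIV_cong[OF DERIV_power[OF DERIV_ident]]) simp
  from DERIV_add[OF DERIV_cmult[OF this, of a] DERIV_const[of 1]]
  have "((\<lambda>y. a * y ^ (m+1) + 1) has_field_derivative a * (of_nat (m+1) * x ^ m)) (at x)"
    by simp
  from logderiv_of_nonzero[OF this assms] show ?thesis by (simp add: algebra_simps)
qed

lemma one_plus_power_le:
  fixes x :: real
  assumes "0 \<le> x" "real m * x \<le> 1/2"
  shows "(1 + x) ^ m \<le> 1 + 2 * real m * x"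
  using assms
proof (induction m)
  case (Suc m)
  have mx: "real m * x \<le> 1/2"
    using Suc.prems mult_right_mono[of "real m" "real (Suc m)" x] by simp
  have "(1 + x) ^ Suc m \<le> (1 + 2 * real m * x) * (1 + x)"
    using Suc.IH[OF Suc.prems(1) mx] Suc.prems(1) by (simp add: mult_right_mono)
  also have "\<dots> = 1 + (2 * real m + 1) * x + 2 * (real m * x) * x"
    by (simp add: algebra_simps)
  also have "\<dots> \<le> 1 + (2 * real m + 1) * x + x"
    using mult_right_mono[OF mx Suc.prems(1)] by simp
  finally show ?case by (simp add: algebra_simps)
qed simp

lemma norm_divide_diff_le:
  fixes x y :: "'a::real_normed_field"
  assumes "norm x \<le> t * norm y" "0 \<le> t" "t \<le> 1/2"
  shows "norm (x / (y - x)) \<le> 2 * t"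
proof (cases "y = 0")
  case True
  with assms show ?thesis by simp
next
  case False
  have "norm x \<le> norm y / 2"
    using assms mult_right_mono[OF assms(3), of "norm y"] by simp
  then have yx: "norm (y - x) \<ge> norm y / 2"
    using norm_triangle_ineq2[of y x] by linarith
  have "norm (x / (y - x)) = norm x / norm (y - x)" by (simp add: norm_divide)
  also have "\<dots> \<le> (t * norm y) / (norm y / 2)"
    using yx False assms(1,2) by (intro frac_le) auto
  also have "\<dots> = 2 * t" using False by simp
  finally show ?thesis .
qed

lemma neq_if_norm_le_scaled:
  fixes x y :: "'a::real_normed_vector"
  assumes "norm x \<le> t * norm y" "t < 1" "y \<noteq> 0"
  shows "x \<noteq> y"
  using assms mult_strict_right_mono[OF assms(2), of "norm y"] by auto

lemma norm_power_le_power_scaled: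
  fixes u v :: "'a::real_normed_div_algebra"
  assumes "norm u \<le> c * norm v" "0 \<le> c"
  shows "norm (u ^ m) \<le> c ^ m * norm (v ^ m)"
  using power_mono[OF assms(1), of m] by (simp add: norm_power power_mult_distrib)

lemma norm_exp_minus_one_le:
  fixes w :: complex
  assumes "norm w \<le> 1/20"
  shows "norm (exp w - 1) \<le> (11/10) * norm w"
proof -
  have "norm (exp w - (\<Sum>i\<le>0. w ^ i / fact i)) \<le> exp (norm w) * (norm w ^ Suc 0) / fact 0"
    by (rule Taylor_exp_field)
  then have taylor: "norm (exp w - 1) \<le> exp (norm w) * norm w" by simp
  have "norm (exp (complex_of_real (norm w))) \<le> 1 + 2 * norm (complex_of_real (norm w))"
    by (rule exp_bound_lemma) (use assms in simp)
  then have "exp (norm w) \<le> 11/10"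
    using assms by (simp add: exp_of_real[symmetric] del: exp_of_real)
  then show ?thesis
    using taylor mult_right_mono[of "exp (norm w)" "11/10" "norm w"] by simp
qed

lemma norm_Ln_one_plus_le:
  fixes u :: complex
  assumes "norm u \<le> 1/20"
  shows "norm (Ln (1 + u)) \<le> (11/10) * norm u"
proof -
  have "norm (Ln (1 + u) - u) \<le> norm u ^ 2 / (1 - norm u)"
    by (rule Ln_approx_linear) (use assms in simp)
  also have "\<dots> = norm u * (norm u / (1 - norm u))" by (simp add: power2_eq_square)
  also have "\<dots> \<le> norm u * (1/10)"
    using assms by (intro mult_left_mono) (simp_all add: field_simps)
  finally show ?thesis using norm_triangle_ineq2[of "Ln (1 + u)" u] by linarith
qed

lemma norm_power_minus_one_le:
  fixes \<zeta> :: "'a::real_normed_div_algebra"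
  assumes "norm \<zeta> = 1"
  shows "norm (\<zeta> ^ m - 1) \<le> real m * norm (\<zeta> - 1)"
proof (induction m)
  case (Suc m)
  have "norm (\<zeta> ^ Suc m - 1) = norm (\<zeta> * (\<zeta> ^ m - 1) + (\<zeta> - 1))"
    by (simp add: algebra_simps)
  also have "\<dots> \<le> norm (\<zeta> ^ m - 1) + norm (\<zeta> - 1)"
    using norm_triangle_ineq[of "\<zeta> * (\<zeta> ^ m - 1)"] assms by (simp add: norm_mult)
  finally show ?case using Suc.IH by (simp add: algebra_simps)
qed simp

text \<open>Summing \<open>1 - \<zeta>^m\<close> over \<open>m < N\<close> gives \<open>N\<close>, and each summand is at most \<open>N |\<zeta> - 1|\<close>.\<close>

lemma root_of_unity_dist_one_ge:
  fixes \<zeta> :: complex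
  assumes "\<zeta> ^ N = 1" "\<zeta> \<noteq> 1" "N > 0"
  shows "1 \<le> real N * norm (\<zeta> - 1)"
proof -
  have norm1: "norm \<zeta> = 1" using power_eq_1_iff[OF assms(1)] assms(3) by simp
  have "(\<Sum>m<N. \<zeta> ^ m) = 0" using geometric_sum[OF assms(2), of N] assms(1) by simp
  then have "real N = norm (\<Sum>m<N. 1 - \<zeta> ^ m)"
    by (simp add: sum_subtractf del: of_nat_sum)
  also have "\<dots> \<le> (\<Sum>m<N. norm (1 - \<zeta> ^ m))" by (rule norm_sum)
  also have "\<dots> \<le> of_nat (card {..<N}) * (real N * norm (\<zeta> - 1))"
  proof (rule sum_bounded_above)
    fix m assume "m \<in> {..<N}"
    then have "real m * norm (\<zeta> - 1) \<le> real N * norm (\<zeta> - 1)" by (intro mult_right_mono) auto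
    then show "norm (1 - \<zeta> ^ m) \<le> real N * norm (\<zeta> - 1)"
      using norm_power_minus_one_le[OF norm1, of m] by (simp add: norm_minus_commute)
  qed
  finally have "real N * 1 \<le> real N * (real N * norm (\<zeta> - 1))" by simp
  then show ?thesis using assms(3) by (simp only: mult_le_cancel_left_pos of_nat_0_less_iff)
qed

lemma two_power_lt_powr_plus_half:
  fixes s :: real
  assumes "0 < s" "s \<le> 1/100"
  shows "2 * s ^ (n+1) < s powr (real n + 1/2)"
proof -
  have sqrt_le: "sqrt s \<le> 1/10"
    using assms real_sqrt_le_mono[of s "1/100"] by (simp add: real_sqrt_divide)
  have "2 * s = 2 * sqrt s * sqrt s" using assms by simp
  also have "\<dots> < sqrt s" using sqrt_le assms by (simp add: mult_less_cancel_right1)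
  finally have "s ^ n * (2 * s) < s ^ n * sqrt s" using assms by (intro mult_strict_left_mono) auto
  moreover have "s powr (real n + 1/2) = s ^ n * sqrt s"
    using assms by (simp add: powr_add powr_realpow powr_half_sqrt)
  ultimately show ?thesis by (simp add: algebra_simps)
qed

lemma alternating_sum_eq:
  fixes i m :: nat
  assumes "i \<le> m"
  shows "2 * (\<Sum>k=Suc i..m. (-1::'a::comm_ring_1) ^ (k - 1)) = (-1) ^ i - (-1) ^ m"
  using assms
proof (induction m rule: dec_induct)
  case (step m)
  have "(-1::'a) ^ Suc m = - ((-1) ^ m)" by simp
  with step show ?case by (simp add: algebra_simps)
qed simp

text \<open>The quantity \<open>z P_n'(z) / (P_n(z) - B_n)\<close>, as the sum of the contributions of the factors.\<close>

definition zlogderiv_P :: "nat \<Rightarrow> (nat \<Rightarrow> complex) \<Rightarrow> complex \<Rightarrow> complex" where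
  "zlogderiv_P n b z = (-1)^(n+1) * of_nat (n+1)
     - of_nat n * of_nat (n+1) * z^(n+1) / (of_nat n * z^(n+1) + 1)
     + (\<Sum>k=1..n-1. (-1)^(k-1) * of_nat (2*n+2) * z^(2*n+2) / (z^(2*n+2) - b k ^ (2*n+2)))"

lemma P_n_has_field_derivative:
  assumes z: "z \<noteq> 0" "of_nat n * z^(n+1) + 1 \<noteq> 0"
    "\<forall>k\<in>{1..n-1}. z^(2*n+2) \<noteq> b k ^ (2*n+2)"
  shows "(P_n n b has_field_derivative (P_n n b z - B_n n b) * (zlogderiv_P n b z / z)) (at z)"
proof -
  define m where "m = 2*n+2"
  define e :: int where "e = (-1)^(n+1) * int (n+1)"
  define roots where "roots = (\<Sum>k=1..n-1. of_int ((-1)^(k-1)) * of_nat m * z^(m-1) / (z^m - b k ^ m))"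
  let ?L = "0 + ((0 + of_int e / z)
    - of_nat n * of_nat (n+1) * z^n / (of_nat n * z^(n+1) + 1)) + roots"
  have "((\<lambda>y. A_n n b * (of_nat (n+1) * y powi e / (of_nat n * y^(n+1) + 1))
      * (\<Prod>k=1..n-1. (y^m - b k ^ m) powi ((-1)^(k-1)))) has_field_derivative
     (A_n n b * (of_nat (n+1) * z powi e / (of_nat n * z^(n+1) + 1))
      * (\<Prod>k=1..n-1. (z^m - b k ^ m) powi ((-1)^(k-1)))) * ?L) (at z)"
    unfolding roots_def
    by (intro logderiv_mult logderiv_divide logderiv_prod logderiv_power_int
        logderiv_power_diff_power_int logderiv_scaled_power_plus_one z(1,2) finite_atLeastAtMost)
       (use z(3) in \<open>auto simp: m_def\<close>)
  then have "((\<lambda>y. P_n n b y - B_n n b) has_field_derivative (P_n n b z - B_n n b) * ?L) (at z)"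
    unfolding P_n_def m_def e_def by simp
  then have deriv: "(P_n n b has_field_derivative (P_n n b z - B_n n b) * ?L) (at z)"
    using DERIV_add[of "\<lambda>y. P_n n b y - B_n n b" _ z UNIV "\<lambda>_. B_n n b" 0] by simp
  have roots_z: "roots * z = (\<Sum>k=1..n-1. (-1)^(k-1) * of_nat m * z^m / (z^m - b k ^ m))"
    unfolding roots_def sum_distrib_right
  proof (rule sum.cong)
    have "z^(m-1) * z = z^m" unfolding m_def by (simp add: mult.commute)
    then show "of_int ((-1)^(k-1)) * of_nat m * z^(m-1) / (z^m - b k ^ m) * z
        = (-1)^(k-1) * of_nat m * z^m / (z^m - b k ^ m)" for k
      by (simp add: field_simps)
  qed simp
  have "?L * z = of_int e - of_nat n * of_nat (n+1) * (z^n * z) / (of_nat n * z^(n+1) + 1) + roots * z"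
    using z(1) by (simp add: ring_distribs)
  also have "\<dots> = zlogderiv_P n b z"
    unfolding roots_z zlogderiv_P_def e_def m_def by (simp add: mult.commute)
  finally have "?L * z = zlogderiv_P n b z" .
  then have "?L = zlogderiv_P n b z / z" using z(1) by (simp add: eq_divide_eq)
  then show ?thesis using deriv by simp
qed

locale critical_point_setting =
  fixes n :: nat and s :: real and b :: "nat \<Rightarrow> complex"
  assumes n_ge_2: "n \<ge> 2" and s_pos: "0 < s" and s_le: "s \<le> 1 / (25 * real n ^ 2)"
    and norm_b_eq: "\<forall>i\<in>{1..n-1}. norm (b i) = s ^ i"
begin

abbreviation N :: nat where "N \<equiv> 2*n+2"

abbreviation \<sigma> :: real where "\<sigma> \<equiv> s ^ (n+1)"

lemma s_le_1_100: "s \<le> 1/100"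
proof -
  have "real n ^ 2 \<ge> 2 ^ 2" using n_ge_2 by (intro power_mono) auto
  then have "1 / (25 * real n ^ 2) \<le> 1 / (25 * 2 ^ 2)" using n_ge_2 by (intro divide_left_mono) auto
  then show ?thesis using s_le by simp
qed

lemma n_sq_mult_s_le: "real n ^ 2 * s \<le> 1/25"
proof -
  have "real n ^ 2 * s \<le> real n ^ 2 * (1 / (25 * real n ^ 2))"
    using s_le by (intro mult_left_mono) auto
  also have "\<dots> = 1/25" using n_ge_2 by simp
  finally show ?thesis .
qed

lemma sigma_pos: "\<sigma> > 0" using s_pos by simp

lemma n_mult_sigma_le: "real n * \<sigma> \<le> 1/500000"
proof -
  have "real n * s \<le> 1/50"
  proof -
    have "real n * s \<le> real n * (1 / (25 * real n ^ 2))" using s_le by (intro mult_left_mono) auto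
    also have "\<dots> = 1 / (25 * real n)" using n_ge_2 by (simp add: power2_eq_square)
    also have "\<dots> \<le> 1/50" using n_ge_2 by (simp add: field_simps)
    finally show ?thesis .
  qed
  moreover have "s ^ n \<le> 1/10000"
  proof -
    have "s ^ n \<le> s ^ 2" using s_pos s_le_1_100 n_ge_2 by (intro power_decreasing) auto
    also have "\<dots> \<le> (1/100) ^ 2" using s_pos s_le_1_100 by (intro power_mono) auto
    finally show ?thesis by (simp add: power2_eq_square)
  qed
  ultimately have "(real n * s) * s ^ n \<le> (1/50) * (1/10000)"
    using s_pos by (intro mult_mono) auto
  then show ?thesis by (simp add: algebra_simps)
qed

lemma sigma_le: "\<sigma> \<le> 1/1000000"
proof -
  have "2 * \<sigma> \<le> real n * \<sigma>" using n_ge_2 sigma_pos by (intro mult_right_mono) auto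
  then show ?thesis using n_mult_sigma_le by linarith
qed

lemma power_N_two_s_le: "(2 * s) ^ N \<le> \<sigma> / 25"
proof -
  have "(2 * s) ^ N = ((2 * s) ^ 2) ^ (n+1)" unfolding power_mult[symmetric] by (simp add: algebra_simps)
  also have "(2 * s) ^ 2 = (4 * s) * s" by (simp add: power2_eq_square)
  also have "((4 * s) * s) ^ (n+1) = (4 * s) ^ (n+1) * \<sigma>" by (rule power_mult_distrib)
  also have "\<dots> \<le> (1/25) * \<sigma>"
  proof (rule mult_right_mono)
    have "(4 * s) ^ (n+1) \<le> (4 * s) ^ 1" using s_pos s_le_1_100 by (intro power_decreasing) auto
    then show "(4 * s) ^ (n+1) \<le> 1/25" using s_le_1_100 by simp
  qed (use sigma_pos in simp)
  finally show ?thesis by simp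
qed

lemma norm_b: "i \<in> {1..n-1} \<Longrightarrow> norm (b i) = s ^ i"
  using norm_b_eq by auto

lemma norm_b_pos: "i \<in> {1..n-1} \<Longrightarrow> norm (b i) > 0"
  using norm_b s_pos by simp

lemma norm_b_le_s: "i \<in> {1..n-1} \<Longrightarrow> norm (b i) \<le> s"
  using norm_b s_pos s_le_1_100 power_decreasing[of 1 i s] by auto

lemma norm_b_less_index:
  assumes "i \<in> {1..n-1}" "k \<in> {1..n-1}" "i < k"
  shows "norm (b k) \<le> s * norm (b i)"
proof -
  have "s ^ k \<le> s ^ Suc i" using assms s_pos s_le_1_100 by (intro power_decreasing) auto
  then show ?thesis using assms norm_b by simp
qed

lemma norm_b_power_N_le:
  assumes "k \<in> {1..n-1}"
  shows "norm (b k ^ N) \<le> s"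
proof -
  have "norm (b k) ^ N \<le> norm (b k) ^ 1"
    using norm_b_pos[OF assms] norm_b_le_s[OF assms] s_le_1_100 by (intro power_decreasing) auto
  then show ?thesis using norm_b_le_s[OF assms] unfolding norm_power by simp
qed

lemma norm_C_n_le: "norm (C_n n b) \<le> real n * (2 * s)"
proof -
  have "norm (C_n n b) \<le> (\<Sum>k=1..n-1. norm ((-1)^(k-1) * b k ^ N / (1 - b k ^ N)))"
    unfolding C_n_def by (rule norm_sum)
  also have "\<dots> \<le> of_nat (card {1..n-1}) * (2 * s)"
  proof (rule sum_bounded_above)
    fix k assume k: "k \<in> {1..n-1}"
    have "norm (b k ^ N / (1 - b k ^ N)) \<le> 2 * s"
      using norm_divide_diff_le[of "b k ^ N" s 1] norm_b_power_N_le[OF k] s_pos s_le_1_100 by simp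
    then show "norm ((-1)^(k-1) * b k ^ N / (1 - b k ^ N)) \<le> 2 * s"
      by (simp add: norm_mult norm_divide norm_power)
  qed
  also have "\<dots> \<le> real n * (2 * s)" using s_pos by (intro mult_right_mono) auto
  finally show ?thesis .
qed

lemma A_n_nonzero: "A_n n b \<noteq> 0"
proof -
  have "norm (of_nat N * C_n n b) = real N * norm (C_n n b)" by (simp add: norm_mult del: of_nat_Suc)
  also have "\<dots> \<le> real (3*n) * (real n * (2 * s))"
    using norm_C_n_le n_ge_2 by (intro mult_mono) auto
  also have "\<dots> = 6 * (real n ^ 2 * s)" by (simp add: power2_eq_square)
  finally have "norm (of_nat N * C_n n b) < 1" using n_sq_mult_s_le by simp
  then have "1 + of_nat N * C_n n b \<noteq> 0"
    by (metis add.inverse_unique norm_minus_cancel norm_one order_less_irrefl)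
  moreover have "1 - b k ^ N \<noteq> 0" if "k \<in> {1..n-1}" for k
    using norm_b_power_N_le[OF that] s_le_1_100 by auto
  ultimately show ?thesis unfolding A_n_def by (auto simp: prod_zero_iff)
qed

lemma P_n_neq_B_n:
  assumes "z \<noteq> 0" "of_nat n * z^(n+1) + 1 \<noteq> 0" "\<forall>k\<in>{1..n-1}. z^N \<noteq> b k ^ N"
  shows "P_n n b z \<noteq> B_n n b"
  using assms A_n_nonzero unfolding P_n_def by (auto simp: prod_zero_iff simp del: of_nat_Suc)

definition den_term :: "complex \<Rightarrow> complex" where
  "den_term z = of_nat n * of_nat (n+1) * z^(n+1) / (of_nat n * z^(n+1) + 1)"

definition root_term :: "nat \<Rightarrow> complex \<Rightarrow> complex" where
  "root_term k z = (-1)^(k-1) * of_nat N * z^N / (z^N - b k ^ N)"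

definition other_terms :: "nat \<Rightarrow> complex \<Rightarrow> complex" where
  "other_terms i z = (-1)^(n+1) * of_nat (n+1) - den_term z + (\<Sum>k\<in>{1..n-1}-{i}. root_term k z)"

text \<open>
  \<open>zlogderiv_P n b z = 0\<close> means \<open>E i z = z^N / (z^N - b_i^N)\<close>, i.e.
  \<open>z^N = - b_i^N E(z) / (1 - E(z))\<close>.\<close>

definition E :: "nat \<Rightarrow> complex \<Rightarrow> complex" where
  "E i z = (-1)^i * other_terms i z / of_nat N"

text \<open>
  \<open>root_term k z\<close> is close to \<open>0\<close> for \<open>|z| \<ll> |b_k|\<close> (the case \<open>k < i\<close> when \<open>|z| \<approx> |b_i|\<close>)
  and close to \<open>(-1)^(k-1) N\<close> for \<open>|z| \<gg> |b_k|\<close> (the case \<open>k > i\<close>); \<open>root_term_dev\<close> is the difference from that limit.\<close>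

definition root_term_dev :: "nat \<Rightarrow> nat \<Rightarrow> complex \<Rightarrow> complex" where
  "root_term_dev i k z =
     (if k < i then root_term k z else root_term k z - (-1)^(k-1) * of_nat N)"

lemma zlogderiv_P_split:
  assumes "i \<in> {1..n-1}"
  shows "zlogderiv_P n b z = other_terms i z + root_term i z"
proof -
  have "(\<Sum>k=1..n-1. root_term k z) = root_term i z + (\<Sum>k\<in>{1..n-1}-{i}. root_term k z)"
    by (rule sum.remove) (use assms in auto)
  then show ?thesis
    unfolding zlogderiv_P_def other_terms_def den_term_def by (simp add: root_term_def)
qed

lemma E_minus_half:
  assumes "i \<in> {1..n-1}"
  shows "E i z - 1/2
    = (-1)^i * (- den_term z + (\<Sum>k\<in>{1..n-1}-{i}. root_term_dev i k z)) / of_nat N"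
proof -
  define K where "K = {1..n-1}-{i}"
  define f :: "nat \<Rightarrow> complex" where "f k = (-1)^(k-1) * of_nat N" for k
  have "(\<Sum>k\<in>K. root_term k z) = (\<Sum>k\<in>K. root_term_dev i k z) + (\<Sum>k\<in>K. if \<not> k < i then f k else 0)"
    unfolding sum.distrib[symmetric] root_term_dev_def f_def by (rule sum.cong) auto
  also have "(\<Sum>k\<in>K. if \<not> k < i then f k else 0) = (\<Sum>k\<in>{k\<in>K. \<not> k < i}. f k)"
    using sum.inter_filter[of K f "\<lambda>k. \<not> k < i"] unfolding K_def by simp
  also have "{k\<in>K. \<not> k < i} = {Suc i..n-1}" unfolding K_def by auto
  finally have split: "(\<Sum>k\<in>K. root_term k z) = (\<Sum>k\<in>K. root_term_dev i k z) + (\<Sum>k=Suc i..n-1. f k)" .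
  have "(\<Sum>k=Suc i..n-1. f k) = (\<Sum>k=Suc i..n-1. (-1)^(k-1)) * of_nat N"
    unfolding f_def by (simp add: sum_distrib_right)
  also have "\<dots> = (2 * (\<Sum>k=Suc i..n-1. (-1)^(k-1))) * of_nat (n+1)" by simp
  also have "2 * (\<Sum>k=Suc i..n-1. (-1::complex)^(k-1)) = (-1)^i - (-1)^(n-1)"
    using assms by (intro alternating_sum_eq) auto
  finally have sum_f: "(\<Sum>k=Suc i..n-1. f k) = ((-1)^i - (-1)^(n-1)) * of_nat (n+1)" .
  have "n+1 = (n-1) + 2" using n_ge_2 by simp
  then have sign_n: "(-1::complex)^(n+1) = (-1)^(n-1)" by (simp only: power_add) simp
  have sign_i: "(-1::complex)^i * (-1)^i = 1" by (simp add: power_add[symmetric])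
  have "u * (v * a + (u - v) * a) = u * u * a" for u v a :: complex by (simp add: algebra_simps)
  from this[of "(-1)^i" "(-1)^(n-1)" "of_nat (n+1)"]
  have sign: "(-1)^i * ((-1)^(n+1) * of_nat (n+1) + (\<Sum>k=Suc i..n-1. f k)) = (of_nat (n+1)::complex)"
    unfolding sum_f sign_n sign_i by simp
  have "E i z = ((-1)^i * ((-1)^(n+1) * of_nat (n+1) + (\<Sum>k=Suc i..n-1. f k))
      + (-1)^i * (- den_term z + (\<Sum>k\<in>K. root_term_dev i k z))) / of_nat N"
    unfolding E_def other_terms_def K_def[symmetric] split by (simp add: algebra_simps)
  also have "\<dots> = 1/2 + (-1)^i * (- den_term z + (\<Sum>k\<in>K. root_term_dev i k z)) / of_nat N"
  proof -
    have "(of_nat N::complex) = 2 * of_nat (n+1)" by simp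
    then have "of_nat (n+1) / of_nat N = (1/2::complex)" by (simp del: of_nat_Suc)
    then show ?thesis unfolding sign add_divide_distrib by simp
  qed
  finally show ?thesis unfolding K_def by simp
qed

subsection \<open>Estimates near the circle \<open>|z| = |b_i|\<close>\<close>

context
  fixes i :: nat and z :: complex
  assumes i: "i \<in> {1..n-1}"
    and norm_z_ge: "norm (b i) * (1 - 2 * \<sigma>) \<le> norm z"
    and norm_z_le: "norm z \<le> norm (b i) * (1 + 2 * \<sigma>)"
begin

lemma norm_z_ge_half: "norm z \<ge> norm (b i) / 2"
proof -
  have "norm (b i) * (1/2) \<le> norm (b i) * (1 - 2 * \<sigma>)"
    using sigma_le norm_b_pos[OF i] by (intro mult_left_mono) auto
  then show ?thesis using norm_z_ge by simp
qed

lemma norm_z_le_twice: "norm z \<le> 2 * norm (b i)"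
proof -
  have "norm (b i) * (1 + 2 * \<sigma>) \<le> norm (b i) * 2"
    using sigma_le norm_b_pos[OF i] by (intro mult_left_mono) auto
  then show ?thesis using norm_z_le by simp
qed

lemma z_nonzero: "z \<noteq> 0"
  using norm_z_ge_half norm_b_pos[OF i] by auto

lemma norm_z_power_le: "norm z ^ (n+1) \<le> (101/100) * \<sigma>"
proof -
  have "norm z \<le> s * (1 + 2 * \<sigma>)"
    using norm_z_le by (rule order_trans) (use norm_b_le_s[OF i] sigma_pos in \<open>simp add: mult_right_mono\<close>)
  then have "norm z ^ (n+1) \<le> (s * (1 + 2 * \<sigma>)) ^ (n+1)" by (rule power_mono) simp
  then have "norm z ^ (n+1) \<le> \<sigma> * (1 + 2 * \<sigma>) ^ (n+1)" by (simp only: power_mult_distrib)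
  also have "(1 + 2 * \<sigma>) ^ (n+1) \<le> 101/100"
  proof -
    have "real (n+1) * (2 * \<sigma>) \<le> 4 * (real n * \<sigma>)"
      using n_ge_2 sigma_pos mult_right_mono[of "real (n+1)" "2 * real n" "2 * \<sigma>"] by simp
    then have small: "real (n+1) * (2 * \<sigma>) \<le> 1/100000" using n_mult_sigma_le by linarith
    then have "(1 + 2 * \<sigma>) ^ (n+1) \<le> 1 + 2 * real (n+1) * (2 * \<sigma>)"
      using sigma_pos by (intro one_plus_power_le) auto
    also have "\<dots> \<le> 101/100" using small by linarith
    finally show ?thesis .
  qed
  then have "\<sigma> * (1 + 2 * \<sigma>) ^ (n+1) \<le> \<sigma> * (101/100)"
    using sigma_pos by (intro mult_left_mono) auto
  finally show ?thesis by linarith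
qed

lemma den_nonzero: "of_nat n * z^(n+1) + 1 \<noteq> 0"
  and norm_den_term_le: "norm (den_term z) \<le> real n * real (n+1) * (26/25) * \<sigma>"
proof -
  have "norm (of_nat n * z^(n+1)) = real n * norm z ^ (n+1)" by (simp add: norm_mult norm_power)
  also have "\<dots> \<le> real n * ((101/100) * \<sigma>)" using norm_z_power_le by (intro mult_left_mono) auto
  also have "\<dots> = (101/100) * (real n * \<sigma>)" by simp
  also have "\<dots> \<le> 1/100" using n_mult_sigma_le by linarith
  finally have "norm (of_nat n * z^(n+1)) \<le> 1/100" .
  then have den: "norm (of_nat n * z^(n+1) + 1) \<ge> 99/100"
    using norm_triangle_ineq2[of 1 "- (of_nat n * z^(n+1))"] by (simp add: add.commute)
  then show "of_nat n * z^(n+1) + 1 \<noteq> 0" by auto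
  have "norm (den_term z) = real n * real (n+1) * norm z ^ (n+1) / norm (of_nat n * z^(n+1) + 1)"
    unfolding den_term_def by (simp add: norm_mult norm_divide norm_power del: of_nat_Suc)
  also have "\<dots> \<le> real n * real (n+1) * ((101/100) * \<sigma>) / (99/100)"
    using norm_z_power_le den s_pos by (intro frac_le mult_left_mono) auto
  also have "\<dots> \<le> real n * real (n+1) * (26/25) * \<sigma>"
    using s_pos by (simp add: field_simps)
  finally show "norm (den_term z) \<le> real n * real (n+1) * (26/25) * \<sigma>" .
qed

lemma root_term_dev_bound:
  assumes k: "k \<in> {1..n-1}" "k \<noteq> i"
  shows "z^N \<noteq> b k ^ N" and "norm (root_term_dev i k z) \<le> of_nat N * (2 * (2 * s) ^ N)"
proof -
  define t where "t = (2 * s) ^ N"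
  define c where "c = b k ^ N"
  have "t \<le> \<sigma> / 25" unfolding t_def by (rule power_N_two_s_le)
  moreover have "0 \<le> t" unfolding t_def using s_pos by simp
  ultimately have t: "0 \<le> t" "t \<le> 1/2" using sigma_le by linarith+
  have "c \<noteq> 0" "z^N \<noteq> 0" unfolding c_def using norm_b_pos[OF k(1)] z_nonzero by auto
  have "z^N \<noteq> c \<and> norm (root_term_dev i k z) \<le> of_nat N * (2 * t)"
  proof (cases "k < i")
    case True
    have "norm z \<le> 2 * s * norm (b k)"
      using norm_z_le_twice norm_b_less_index[OF k(1) i True] by simp
    then have small: "norm (z^N) \<le> t * norm c"
      unfolding t_def c_def using s_pos by (intro norm_power_le_power_scaled) (simp_all add: algebra_simps)
    have "root_term_dev i k z = - ((-1)^(k-1) * of_nat N * (z^N / (c - z^N)))"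
      unfolding root_term_dev_def root_term_def c_def using True by (simp add: minus_divide_right)
    then have "norm (root_term_dev i k z) = of_nat N * norm (z^N / (c - z^N))"
      by (simp only: norm_mult norm_minus_cancel norm_power norm_one norm_of_nat power_one)
    then show ?thesis
      using norm_divide_diff_le[OF small t] neq_if_norm_le_scaled[OF small _ \<open>c \<noteq> 0\<close>] t
      by auto
  next
    case False
    then have "i < k" using k by simp
    have "norm (b k) \<le> s * norm (b i)" by (rule norm_b_less_index[OF i k(1) \<open>i < k\<close>])
    also have "\<dots> \<le> s * (2 * norm z)" using norm_z_ge_half s_pos by (intro mult_left_mono) auto
    finally have "norm (b k) \<le> 2 * s * norm z" by simp
    then have small: "norm c \<le> t * norm (z^N)"
      unfolding t_def c_def using s_pos by (intro norm_power_le_power_scaled) (simp_all add: algebra_simps)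
    have ne: "z^N \<noteq> c" using neq_if_norm_le_scaled[OF small _ \<open>z^N \<noteq> 0\<close>] t by auto
    have "root_term_dev i k z = (-1)^(k-1) * of_nat N * (c / (z^N - c))"
      unfolding root_term_dev_def root_term_def c_def[symmetric] using False ne by (simp add: field_simps)
    then have "norm (root_term_dev i k z) = of_nat N * norm (c / (z^N - c))"
      by (simp only: norm_mult norm_minus_cancel norm_power norm_one norm_of_nat power_one)
    then show ?thesis using norm_divide_diff_le[OF small t] ne by simp
  qed
  then show "z^N \<noteq> b k ^ N" "norm (root_term_dev i k z) \<le> of_nat N * (2 * (2 * s) ^ N)"
    unfolding t_def c_def by auto
qed

lemma norm_E_minus_half_le: "norm (E i z - 1/2) \<le> (3/5) * real n * \<sigma>"
proof -
  define K where "K = {1..n-1}-{i}"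
  define t where "t = (2 * s) ^ N"
  have "norm (E i z - 1/2) = norm (- den_term z + (\<Sum>k\<in>K. root_term_dev i k z)) / real N"
    unfolding E_minus_half[OF i] K_def[symmetric]
    by (simp add: norm_mult norm_divide norm_power del: of_nat_Suc)
  also have "\<dots> \<le> (norm (den_term z) + (\<Sum>k\<in>K. norm (root_term_dev i k z))) / real N"
  proof (rule divide_right_mono)
    have "norm (- den_term z + (\<Sum>k\<in>K. root_term_dev i k z))
        \<le> norm (den_term z) + norm (\<Sum>k\<in>K. root_term_dev i k z)"
      using norm_triangle_ineq[of "- den_term z"] by simp
    also have "norm (\<Sum>k\<in>K. root_term_dev i k z) \<le> (\<Sum>k\<in>K. norm (root_term_dev i k z))"
      by (rule norm_sum)
    finally show "norm (- den_term z + (\<Sum>k\<in>K. root_term_dev i k z))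
        \<le> norm (den_term z) + (\<Sum>k\<in>K. norm (root_term_dev i k z))" by simp
  qed simp
  also have "\<dots> \<le> (real n * real (n+1) * (26/25) * \<sigma> + real n * (real N * (2 * t))) / real N"
  proof (rule divide_right_mono)
    have "(\<Sum>k\<in>K. norm (root_term_dev i k z)) \<le> of_nat (card K) * (real N * (2 * t))"
      by (rule sum_bounded_above) (use root_term_dev_bound(2) in \<open>auto simp: K_def t_def\<close>)
    also have "\<dots> \<le> real n * (real N * (2 * t))"
    proof (rule mult_right_mono)
      have "card K \<le> card {1..n-1}" unfolding K_def by (rule card_mono) auto
      then show "real (card K) \<le> real n" by simp
    qed (use s_pos in \<open>simp add: t_def\<close>)
    finally show "norm (den_term z) + (\<Sum>k\<in>K. norm (root_term_dev i k z))
        \<le> real n * real (n+1) * (26/25) * \<sigma> + real n * (real N * (2 * t))"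
      using norm_den_term_le by linarith
  qed simp
  also have "\<dots> = (13/25) * real n * \<sigma> + real n * (2 * t)"
    by (simp add: field_simps)
  also have "\<dots> \<le> (13/25) * real n * \<sigma> + real n * (2 * (\<sigma> / 25))"
    using power_N_two_s_le unfolding t_def by (intro add_left_mono mult_left_mono) auto
  also have "\<dots> = (3/5) * real n * \<sigma>" by simp
  finally show ?thesis .
qed

end

subsection \<open>The critical points as fixed points\<close>

definition omega :: "nat \<Rightarrow> complex" where
  "omega j = exp (complex_of_real pi * \<i> * (2 * of_nat j - 1) / of_nat N)"

definition center :: "nat \<Rightarrow> nat \<Rightarrow> complex" where
  "center i j = b i * omega j"

definition radius :: "nat \<Rightarrow> real" where
  "radius i = 2 * \<sigma> * norm (b i)"

definition q :: "nat \<Rightarrow> complex \<Rightarrow> complex" where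
  "q i z = E i z / (1 - E i z)"

text \<open>Since \<open>\<omega>_j^N = -1\<close>, fixed points of this map solve \<open>z^N = - b_i^N q(z)\<close>; as \<open>q \<approx> 1\<close>,
  its principal \<open>N\<close>-th root keeps the map near \<open>b_i \<omega>_j\<close>.\<close>

definition root_map :: "nat \<Rightarrow> nat \<Rightarrow> complex \<Rightarrow> complex" where
  "root_map i j z = center i j * exp (Ln (q i z) / of_nat N)"

lemma omega_eq: "j \<ge> 1 \<Longrightarrow> omega j = exp (\<i> * of_real (pi * real (2*j-1) / real N))"
  unfolding omega_def by (simp add: of_nat_diff algebra_simps)

lemma norm_omega: "j \<ge> 1 \<Longrightarrow> norm (omega j) = 1"
  by (simp only: omega_eq norm_exp_i_times)

lemma omega_power_N: "j \<ge> 1 \<Longrightarrow> omega j ^ N = -1"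
proof -
  assume j: "j \<ge> 1"
  have "omega j ^ N = exp (of_nat N * (complex_of_real pi * \<i> * (2 * of_nat j - 1) / of_nat N))"
    unfolding omega_def exp_of_nat_mult ..
  also have "of_nat N * (complex_of_real pi * \<i> * (2 * of_nat j - 1) / of_nat N)
      = of_nat (2*j-1) * (complex_of_real pi * \<i>)"
    using j by (simp add: of_nat_diff del: of_nat_Suc)
  also have "exp \<dots> = (-1) ^ (2*j-1)" unfolding exp_of_nat_mult by simp
  also have "\<dots> = -1" using j by (simp add: odd_pos)
  finally show ?thesis .
qed

lemma omega_inj:
  assumes "j1 \<in> {1..N}" "j2 \<in> {1..N}" "omega j1 = omega j2"
  shows "j1 = j2"
proof -
  have factor: "omega j = exp (complex_of_real pi * \<i> / of_nat N)
      * exp (2 * of_real pi * \<i> * of_nat (j-1) / of_nat N)" if "j \<ge> 1" for j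
    unfolding omega_def exp_add[symmetric] add_divide_distrib[symmetric]
    using that by (simp add: of_nat_diff algebra_simps)
  have "exp (2 * of_real pi * \<i> * of_nat (j1-1) / of_nat N)
      = exp (2 * of_real pi * \<i> * of_nat (j2-1) / of_nat N)"
    using assms factor[of j1] factor[of j2] by simp
  then have "(j1-1) mod N = (j2-1) mod N" by (simp add: complex_root_unity_eq del: of_nat_Suc)
  moreover have "(j-1) mod N = j-1" if "j \<in> {1..N}" for j using that by (intro mod_less) auto
  ultimately have "j1 - 1 = j2 - 1" using assms by metis
  then show ?thesis using assms by auto
qed

context
  fixes i j :: nat
  assumes i: "i \<in> {1..n-1}" and j: "j \<in> {1..N}"
begin

lemma norm_center: "norm (center i j) = norm (b i)"
  unfolding center_def using norm_omega j by (simp add: norm_mult)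

lemma in_annulus_if_in_cball:
  assumes "z \<in> cball (center i j) (radius i)"
  shows "norm (b i) * (1 - 2 * \<sigma>) \<le> norm z" "norm z \<le> norm (b i) * (1 + 2 * \<sigma>)"
proof -
  have d: "norm (z - center i j) \<le> radius i" using assms by (simp add: dist_norm norm_minus_commute)
  show "norm (b i) * (1 - 2 * \<sigma>) \<le> norm z"
    using d norm_triangle_ineq2[of "center i j" z] norm_center unfolding radius_def
    by (simp add: algebra_simps norm_minus_commute)
  show "norm z \<le> norm (b i) * (1 + 2 * \<sigma>)"
    using d norm_triangle_ineq[of "z - center i j" "center i j"] norm_center unfolding radius_def
    by (simp add: algebra_simps)
qed

lemma
  assumes "z \<in> cball (center i j) (radius i)"
  shows E_neq_1: "E i z \<noteq> 1" and norm_q_minus_1_le: "norm (q i z - 1) \<le> 3 * real n * \<sigma>"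
proof -
  define e where "e = E i z"
  have e_half: "norm (e - 1/2) \<le> (3/5) * real n * \<sigma>"
    unfolding e_def using norm_E_minus_half_le[OF i in_annulus_if_in_cball[OF assms]] .
  have "norm (1 - e) \<ge> 1/2 - norm (e - 1/2)"
    using norm_triangle_ineq2[of "1/2" "e - 1/2"] by (simp add: norm_minus_commute)
  then have one_minus_e: "norm (1 - e) \<ge> 2/5" using e_half n_mult_sigma_le by linarith
  then show "E i z \<noteq> 1" unfolding e_def[symmetric] by auto
  have "1 - e \<noteq> 0" using one_minus_e by auto
  then have "e / (1 - e) - 1 = (e - (1 - e)) / (1 - e)"
    by (subst diff_divide_distrib) (simp add: divide_self)
  then have "q i z - 1 = 2 * (e - 1/2) / (1 - e)" unfolding q_def e_def[symmetric] by simp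
  then have "norm (q i z - 1) = 2 * norm (e - 1/2) / norm (1 - e)"
    by (simp only: norm_mult norm_divide norm_numeral)
  also have "\<dots> \<le> 2 * ((3/5) * real n * \<sigma>) / (2/5)"
    using e_half one_minus_e sigma_pos by (intro frac_le mult_left_mono) auto
  also have "\<dots> = 3 * real n * \<sigma>" by simp
  finally show "norm (q i z - 1) \<le> 3 * real n * \<sigma>" .
qed

lemma Re_q_pos:
  assumes "z \<in> cball (center i j) (radius i)"
  shows "Re (q i z) > 0"
proof -
  have "norm (q i z - 1) \<le> 1/10" using norm_q_minus_1_le[OF assms] n_mult_sigma_le by linarith
  then have "\<bar>Re (q i z) - 1\<bar> \<le> 1/10" using abs_Re_le_cmod[of "q i z - 1"] by simp
  then show ?thesis by arith
qed

lemma norm_root_map_minus_center_le: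
  assumes "z \<in> cball (center i j) (radius i)"
  shows "norm (root_map i j z - center i j) \<le> (363/200) * \<sigma> * norm (b i)"
proof -
  define w where "w = Ln (q i z) / of_nat N"
  have "norm (q i z - 1) \<le> 1/20" using norm_q_minus_1_le[OF assms] n_mult_sigma_le by linarith
  from norm_Ln_one_plus_le[OF this]
  have Ln_le: "norm (Ln (q i z)) \<le> (11/10) * (3 * real n * \<sigma>)"
    using norm_q_minus_1_le[OF assms] by simp
  have "norm w = norm (Ln (q i z)) / real N"
    unfolding w_def by (simp add: norm_divide del: of_nat_Suc)
  also have "\<dots> \<le> (33/10) * (real n * \<sigma> / real N)"
    using divide_right_mono[OF Ln_le, of "real N"] by simp
  also have "\<dots> \<le> (33/10) * (\<sigma> / 2)"
    using sigma_pos by (intro mult_left_mono) (simp_all add: field_simps)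
  finally have w: "norm w \<le> (33/20) * \<sigma>" by simp
  have "root_map i j z - center i j = center i j * (exp w - 1)"
    unfolding root_map_def w_def by (simp add: algebra_simps)
  then have "norm (root_map i j z - center i j) = norm (b i) * norm (exp w - 1)"
    using norm_center by (simp add: norm_mult)
  also have "\<dots> \<le> norm (b i) * ((11/10) * ((33/20) * \<sigma>))"
    using norm_exp_minus_one_le[of w] w sigma_le by (intro mult_left_mono) auto
  also have "\<dots> = (363/200) * \<sigma> * norm (b i)" by simp
  finally show ?thesis .
qed

lemma root_map_cball: "root_map i j \<in> cball (center i j) (radius i) \<rightarrow> cball (center i j) (radius i)"
proof
  fix z assume z: "z \<in> cball (center i j) (radius i)"
  have "(363/200) * \<sigma> * norm (b i) \<le> (2 * \<sigma>) * norm (b i)"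
    using norm_b_pos[OF i] sigma_pos by (intro mult_right_mono) auto
  then have "norm (root_map i j z - center i j) \<le> radius i"
    using norm_root_map_minus_center_le[OF z] unfolding radius_def by linarith
  then show "root_map i j z \<in> cball (center i j) (radius i)"
    by (simp add: dist_norm norm_minus_commute)
qed

lemma continuous_on_root_map: "continuous_on (cball (center i j) (radius i)) (root_map i j)"
proof -
  define S where "S = cball (center i j) (radius i)"
  have annulus: "norm (b i) * (1 - 2 * \<sigma>) \<le> norm z" "norm z \<le> norm (b i) * (1 + 2 * \<sigma>)"
    if "z \<in> S" for z using in_annulus_if_in_cball that unfolding S_def by auto
  have "continuous_on S den_term"
    unfolding den_term_def using den_nonzero[OF i annulus] by (intro continuous_intros) auto
  moreover have "continuous_on S (root_term k)" if "k \<in> {1..n-1}-{i}" for k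
    unfolding root_term_def using root_term_dev_bound(1)[OF i annulus] that
    by (intro continuous_intros) auto
  moreover have "(of_nat N :: complex) \<noteq> 0" by (simp only: of_nat_eq_0_iff)
  ultimately have "continuous_on S (E i)"
    unfolding E_def other_terms_def by (intro continuous_intros) auto
  then have "continuous_on S (q i)"
    unfolding q_def using E_neq_1 unfolding S_def[symmetric] by (intro continuous_intros) auto
  moreover have "q i z \<notin> \<real>\<^sub>\<le>\<^sub>0" if "z \<in> S" for z
  proof -
    have "Re (q i z) > 0" using that unfolding S_def by (rule Re_q_pos)
    then show ?thesis by (auto simp: complex_nonpos_Reals_iff)
  qed
  ultimately show ?thesis
    unfolding root_map_def S_def[symmetric] using \<open>(of_nat N :: complex) \<noteq> 0\<close>
    by (intro continuous_intros) auto
qed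

lemma root_map_has_fixed_point: "\<exists>z\<in>cball (center i j) (radius i). root_map i j z = z"
proof -
  have "0 \<le> radius i" unfolding radius_def using sigma_pos by simp
  then have "cball (center i j) (radius i) \<noteq> {}" by simp
  from brouwer[OF compact_cball convex_cball this continuous_on_root_map root_map_cball]
  show ?thesis by blast
qed

lemma fixed_point_equation:
  assumes "z \<in> cball (center i j) (radius i)" "root_map i j z = z"
  shows "z^N = - (b i ^ N) * q i z"
proof -
  have "q i z \<noteq> 0" using Re_q_pos[OF assms(1)] by auto
  have "z^N = center i j ^ N * exp (of_nat N * (Ln (q i z) / of_nat N))"
    using assms(2) unfolding root_map_def by (metis power_mult_distrib exp_of_nat_mult)
  also have "\<dots> = center i j ^ N * q i z" using \<open>q i z \<noteq> 0\<close> by (simp del: of_nat_Suc)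
  also have "center i j ^ N = - (b i ^ N)"
    unfolding center_def power_mult_distrib using omega_power_N j by simp
  finally show ?thesis by simp
qed

end

text \<open>This is where the sign convention in \<open>E\<close> pays off: the \<open>i\<close>-th term is \<open>(-1)^(i-1) N E\<close>
  and all other terms together are \<open>(-1)^i N E\<close>.\<close>

lemma zlogderiv_P_eq_0:
  assumes i: "i \<in> {1..n-1}" and "E i z \<noteq> 1" and z: "z^N = - (b i ^ N) * (E i z / (1 - E i z))"
  shows "z^N \<noteq> b i ^ N" "zlogderiv_P n b z = 0"
proof -
  define c where "c = b i ^ N"
  have "1 - E i z \<noteq> 0" using assms(2) by auto
  have "c \<noteq> 0" unfolding c_def using norm_b_pos[OF i] by auto
  have diff: "z^N - c = - c / (1 - E i z)"
    unfolding z c_def[symmetric] using \<open>1 - E i z \<noteq> 0\<close> by (simp add: field_simps)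
  then show "z^N \<noteq> b i ^ N" using \<open>c \<noteq> 0\<close> \<open>1 - E i z \<noteq> 0\<close> unfolding c_def[symmetric] by auto
  have "z^N / (z^N - c) = E i z"
    unfolding diff unfolding z c_def[symmetric] using \<open>1 - E i z \<noteq> 0\<close> \<open>c \<noteq> 0\<close> by (simp add: field_simps)
  moreover have "root_term i z = (-1)^(i-1) * of_nat N * (z^N / (z^N - c))"
    unfolding root_term_def c_def by (simp only: times_divide_eq_right)
  ultimately have root: "root_term i z = (-1)^(i-1) * of_nat N * E i z" by simp
  have "other_terms i z = (-1)^i * (-1)^i * other_terms i z" by (simp add: power_add[symmetric])
  also have "\<dots> = (-1)^i * of_nat N * E i z" unfolding E_def by (simp del: of_nat_Suc)
  finally have other: "other_terms i z = (-1)^i * of_nat N * E i z" .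
  have "(-1::complex)^i = - ((-1)^(i-1))" using i by (cases i) auto
  then show "zlogderiv_P n b z = 0" unfolding zlogderiv_P_split[OF i] root other by simp
qed

lemma critical_point_in_cball:
  assumes i: "i \<in> {1..n-1}" and j: "j \<in> {1..N}"
  shows "\<exists>z\<in>cball (center i j) (radius i). is_crit_P n b z"
proof -
  obtain z where z: "z \<in> cball (center i j) (radius i)" and fixed: "root_map i j z = z"
    using root_map_has_fixed_point[OF i j] by blast
  note annulus = in_annulus_if_in_cball[OF i j z]
  have eq: "z^N = - (b i ^ N) * (E i z / (1 - E i z))"
    using fixed_point_equation[OF i j z fixed] unfolding q_def .
  have roots: "\<forall>k\<in>{1..n-1}. z^N \<noteq> b k ^ N"
    using zlogderiv_P_eq_0(1)[OF i E_neq_1[OF i j z] eq] root_term_dev_bound(1)[OF i annulus]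
    by metis
  have "(P_n n b has_field_derivative 0) (at z)"
    using P_n_has_field_derivative[OF z_nonzero[OF i annulus] den_nonzero[OF i annulus] roots]
      zlogderiv_P_eq_0(2)[OF i E_neq_1[OF i j z] eq] by simp
  then have "is_crit_P n b z"
    unfolding is_crit_P_def using z_nonzero[OF i annulus] den_nonzero[OF i annulus] roots
      P_n_neq_B_n[OF z_nonzero[OF i annulus] den_nonzero[OF i annulus] roots] by blast
  then show ?thesis using z by blast
qed

subsection \<open>Disjointness of the discs\<close>

lemma index_le_if_cballs_meet:
  assumes i1: "i1 \<in> {1..n-1}" and i2: "i2 \<in> {1..n-1}" and "j1 \<in> {1..N}" "j2 \<in> {1..N}"
    and z1: "z \<in> cball (center i1 j1) (radius i1)" and z2: "z \<in> cball (center i2 j2) (radius i2)"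
  shows "i1 \<le> i2"
proof (rule ccontr)
  assume "\<not> i1 \<le> i2"
  then have "norm (b i1) \<le> s * norm (b i2)" using norm_b_less_index[OF i2 i1] by simp
  moreover have "norm (b i2) / 2 \<le> norm z" "norm z \<le> 2 * norm (b i1)"
    using norm_z_ge_half[OF i2 in_annulus_if_in_cball[OF i2 assms(4) z2]]
      norm_z_le_twice[OF i1 in_annulus_if_in_cball[OF i1 assms(3) z1]] by auto
  moreover have "s * norm (b i2) \<le> (1/100) * norm (b i2)"
    using s_le_1_100 norm_b_pos[OF i2] by (intro mult_right_mono) auto
  ultimately show False using norm_b_pos[OF i2] by linarith
qed

lemma root_index_eq_if_cballs_meet:
  assumes i: "i \<in> {1..n-1}" and j1: "j1 \<in> {1..N}" and j2: "j2 \<in> {1..N}"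
    and z1: "z \<in> cball (center i j1) (radius i)" and z2: "z \<in> cball (center i j2) (radius i)"
  shows "j1 = j2"
proof (rule omega_inj[OF j1 j2], rule ccontr)
  assume ne: "omega j1 \<noteq> omega j2"
  have norm1: "norm (omega j1) = 1" "norm (omega j2) = 1" using norm_omega j1 j2 by auto
  have "norm (center i j1 - center i j2) \<le> norm (center i j1 - z) + norm (z - center i j2)"
    using norm_triangle_ineq[of "center i j1 - z" "z - center i j2"] by simp
  also have "\<dots> \<le> radius i + radius i"
    using z1 z2 by (intro add_mono) (auto simp: dist_norm norm_minus_commute)
  finally have "norm (center i j1 - center i j2) \<le> radius i + radius i" .
  moreover have "center i j1 - center i j2 = b i * (omega j1 - omega j2)"
    unfolding center_def by (simp add: right_diff_distrib)
  ultimately have "norm (b i) * norm (omega j1 - omega j2) \<le> norm (b i) * (4 * \<sigma>)"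
    unfolding radius_def by (simp add: norm_mult mult_ac)
  then have dist: "norm (omega j1 - omega j2) \<le> 4 * \<sigma>" using norm_b_pos[OF i] by simp
  define \<zeta> where "\<zeta> = omega j1 / omega j2"
  have "\<zeta> ^ N = 1" unfolding \<zeta>_def power_divide using omega_power_N j1 j2 by simp
  moreover have "\<zeta> \<noteq> 1" unfolding \<zeta>_def using ne norm1 by auto
  ultimately have "1 \<le> real N * norm (\<zeta> - 1)" by (intro root_of_unity_dist_one_ge) auto
  moreover have "norm (\<zeta> - 1) = norm (omega j1 - omega j2)"
  proof -
    have "omega j2 \<noteq> 0" using norm1 by auto
    then have "\<zeta> - 1 = (omega j1 - omega j2) / omega j2" unfolding \<zeta>_def by (simp add: field_simps)
    then show ?thesis using norm1 by (simp add: norm_divide)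
  qed
  moreover have "real N * norm (omega j1 - omega j2) \<le> real N * (4 * \<sigma>)"
    using dist by (intro mult_left_mono) auto
  ultimately have "1 \<le> real N * (4 * \<sigma>)" by (metis order_trans)
  also have "\<dots> \<le> (3 * real n) * (4 * \<sigma>)" using n_ge_2 sigma_pos by (intro mult_right_mono) auto
  finally show False using n_mult_sigma_le by linarith
qed

end

theorem lemma5p4:
  fixes n :: nat and s :: real and b :: "nat \<Rightarrow> complex"
  assumes "n \<ge> 2" and "0 < s" and "s \<le> 1 / (25 * real n ^ 2)"
    and "\<forall>i\<in>{1..n-1}. norm (b i) = s ^ i"
  shows "\<exists>w :: nat \<Rightarrow> nat \<Rightarrow> complex.
     (\<forall>i\<in>{1..n-1}. \<forall>j\<in>{1..2*n+2}.
        is_crit_P n b (w i j) \<and>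
        norm (w i j - b i * exp (complex_of_real pi * \<i> * (2 * of_nat j - 1) / of_nat (2*n+2)))
          < s powr (real n + 1/2) * norm (b i)) \<and>
     (\<forall>i1\<in>{1..n-1}. \<forall>j1\<in>{1..2*n+2}. \<forall>i2\<in>{1..n-1}. \<forall>j2\<in>{1..2*n+2}.
        w i1 j1 = w i2 j2 \<longleftrightarrow> (i1, j1) = (i2, j2))"
proof -
  interpret critical_point_setting n s b using assms by unfold_locales auto
  define w where "w i j = (SOME z. z \<in> cball (center i j) (radius i) \<and> is_crit_P n b z)" for i j
  have w: "w i j \<in> cball (center i j) (radius i)" "is_crit_P n b (w i j)"
    if "i \<in> {1..n-1}" "j \<in> {1..N}" for i j
    using someI_ex[OF critical_point_in_cball[OF that, unfolded Bex_def]] unfolding w_def by auto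
  have close: "norm (w i j - center i j) < s powr (real n + 1/2) * norm (b i)"
    if "i \<in> {1..n-1}" "j \<in> {1..N}" for i j
  proof -
    have "norm (w i j - center i j) \<le> radius i"
      using w(1)[OF that] by (simp add: dist_norm norm_minus_commute)
    also have "\<dots> < s powr (real n + 1/2) * norm (b i)"
      unfolding radius_def using two_power_lt_powr_plus_half[OF s_pos s_le_1_100] norm_b_pos[OF that(1)]
      by (intro mult_strict_right_mono) auto
    finally show ?thesis .
  qed
  show ?thesis
  proof (intro exI conjI ballI)
    fix i j assume ij: "i \<in> {1..n-1}" "j \<in> {1..N}"
    show "is_crit_P n b (w i j)" using w(2)[OF ij] .
    show "norm (w i j - b i * exp (complex_of_real pi * \<i> * (2 * of_nat j - 1) / of_nat N))
        < s powr (real n + 1/2) * norm (b i)"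
      using close[OF ij] unfolding center_def omega_def .
  next
    fix i1 j1 i2 j2 assume ij: "i1 \<in> {1..n-1}" "j1 \<in> {1..N}" "i2 \<in> {1..n-1}" "j2 \<in> {1..N}"
    show "w i1 j1 = w i2 j2 \<longleftrightarrow> (i1, j1) = (i2, j2)"
    proof
      assume "w i1 j1 = w i2 j2"
      then have z1: "w i1 j1 \<in> cball (center i1 j1) (radius i1)"
        and z2: "w i1 j1 \<in> cball (center i2 j2) (radius i2)"
        using w(1)[OF ij(1,2)] w(1)[OF ij(3,4)] by simp_all
      have "i1 = i2"
        using index_le_if_cballs_meet[OF ij(1,3,2,4) z1 z2]
          index_le_if_cballs_meet[OF ij(3,1,4,2) z2 z1] by simp
      moreover have "j1 = j2" using root_index_eq_if_cballs_meet[OF ij(1,2,4) z1] z2 \<open>i1 = i2\<close> by simp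
      ultimately show "(i1, j1) = (i2, j2)" by simp
    qed simp
  qed
qed

end
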